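(* Let $\beta,p,n$ be positive integers and $\mathcal{S}=\mathcal{S}_n(\beta,p)$. If $j$ is an integer with $n-\log_2|\mathcal{S}|+\log_2 n\le j\le n$, then there exists an $(n,j)$ linear code $B_j$ such that $m_{B_j}<1$, where $m_{B}=|V_n\setminus(B+\mathcal{S})|$; that is, $B_j+\mathcal{S}=V_n$.
   Context: $V_n=\{0,1\}^n$ with componentwise addition mod 2. A binary vector is $(\beta,p)$-window-weight-limited if every $\beta$ consecutive entries contain at most $p$ ones; $\mathcal{S}_n(\beta,p)$ is the set of such vectors of length $n$. For $B_1,B_2\subseteq V_n$, $B_1+B_2=\{\mathbf{b}_1+\mathbf{b}_2:\mathbf{b}_i\in B_i\}$. An $(n,j)$ linear code is a $j$-dimensional subspace of $V_n$. *)

theory Defs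
  imports Complex_Main
begin

text \<open>Binary vectors of length n are bool lists of length n (True = 1).\<close>

definition Vn :: "nat \<Rightarrow> bool list set" where
  "Vn n = {x. length x = n}"

definition vadd :: "bool list \<Rightarrow> bool list \<Rightarrow> bool list" where
  "vadd x y = map2 (\<noteq>) x y"

definition vzero :: "nat \<Rightarrow> bool list" where
  "vzero n = replicate n False"

definition setadd :: "bool list set \<Rightarrow> bool list set \<Rightarrow> bool list set" where
  "setadd B1 B2 = {vadd b1 b2 | b1 b2. b1 \<in> B1 \<and> b2 \<in> B2}"

definition window_weight :: "bool list \<Rightarrow> nat \<Rightarrow> nat \<Rightarrow> nat" where
  "window_weight x i \<beta> = length (filter id (take \<beta> (drop i x)))"

definition window_limited :: "nat \<Rightarrow> nat \<Rightarrow> bool list \<Rightarrow> bool" where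
  "window_limited \<beta> p x \<longleftrightarrow> (\<forall>i. i + \<beta> \<le> length x \<longrightarrow> window_weight x i \<beta> \<le> p)"

definition Sn :: "nat \<Rightarrow> nat \<Rightarrow> nat \<Rightarrow> bool list set" where
  "Sn n \<beta> p = {x \<in> Vn n. window_limited \<beta> p x}"

definition lincomb :: "nat \<Rightarrow> bool list list \<Rightarrow> bool list \<Rightarrow> bool list" where
  "lincomb n G c = foldr vadd [G ! i. i \<leftarrow> [0..<length G], c ! i] (vzero n)"

definition gspan :: "nat \<Rightarrow> bool list list \<Rightarrow> bool list set" where
  "gspan n G = {lincomb n G c | c. length c = length G}"

definition lin_indep :: "nat \<Rightarrow> bool list list \<Rightarrow> bool" where
  "lin_indep n G \<longleftrightarrow> (\<forall>c. length c = length G \<and> lincomb n G c = vzero n \<longrightarrow> (\<forall>i<length G. \<not> c ! i))"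

definition subspace2 :: "nat \<Rightarrow> bool list set \<Rightarrow> bool" where
  "subspace2 n B \<longleftrightarrow> B \<subseteq> Vn n \<and> vzero n \<in> B \<and> (\<forall>x\<in>B. \<forall>y\<in>B. vadd x y \<in> B)"

definition linear_code :: "nat \<Rightarrow> nat \<Rightarrow> bool list set \<Rightarrow> bool" where
  "linear_code n j B \<longleftrightarrow> subspace2 n B \<and>
     (\<exists>G. length G = j \<and> set G \<subseteq> Vn n \<and> lin_indep n G \<and> gspan n G = B)"

definition mB :: "nat \<Rightarrow> nat \<Rightarrow> nat \<Rightarrow> bool list set \<Rightarrow> nat" where
  "mB n \<beta> p B = card (Vn n - setadd B (Sn n \<beta> p))"

end

theory Submission
  imports Defs
begin

text \<open>Greedy covering argument. Let \<open>U\<close> be the set of vectors not covered by \<open>B + S\<close>.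
  Adjoining a generator \<open>v\<close> to \<open>B\<close> leaves exactly \<open>U \<inter> (v + U)\<close> uncovered, and summing
  \<open>|U \<inter> (v + U)|\<close> over all \<open>v\<close> counts every pair of \<open>U\<close> once, so some \<open>v\<close> achieves
  \<open>|U \<inter> (v + U)| \<le> |U|\<^sup>2 / 2\<^sup>n\<close>; such a \<open>v\<close> lies outside \<open>B\<close> unless \<open>U\<close> is empty, since \<open>B + S\<close> is
  invariant under \<open>B\<close>. Starting from \<open>|U| = 2\<^sup>n - |S|\<close>, after \<open>j\<close> steps
  \<open>|U| \<le> 2\<^sup>n (1 - |S|/2\<^sup>n)^(2^j) \<le> 2\<^sup>n exp(-|S| 2\<^sup>j / 2\<^sup>n) \<le> (2/e)\<^sup>n < 1\<close>,
  the third inequality being the hypothesis on \<open>j\<close>.\<close>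

lemma length_vadd [simp]: "length (vadd x y) = min (length x) (length y)"
  by (simp add: vadd_def)

lemma length_vzero [simp]: "length (vzero n) = n"
  by (simp add: vzero_def)

lemma vadd_comm: "vadd x y = vadd y x"
  by (rule nth_equalityI) (auto simp: vadd_def)

lemma vadd_assoc: "vadd (vadd x y) z = vadd x (vadd y z)"
  by (rule nth_equalityI) (auto simp: vadd_def)

lemma vadd_left_comm: "vadd x (vadd y z) = vadd y (vadd x z)"
  by (metis vadd_assoc vadd_comm)

lemma vadd_self: "vadd x x = vzero (length x)"
  by (rule nth_equalityI) (auto simp: vadd_def vzero_def)

lemma vzero_vadd: "length x = n \<Longrightarrow> vadd (vzero n) x = x"
  by (rule nth_equalityI) (auto simp: vadd_def vzero_def)

lemma vadd_vadd_cancel: "length x = length y \<Longrightarrow> vadd x (vadd x y) = y"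
  by (metis vadd_assoc vadd_self vzero_vadd)

lemma vadd_vadd_cancel_right: "length x = length y \<Longrightarrow> vadd (vadd y x) x = y"
  by (metis vadd_comm vadd_vadd_cancel)

lemma vzero_in_Vn [simp]: "vzero n \<in> Vn n"
  by (simp add: Vn_def)

lemma vadd_in_Vn: "x \<in> Vn n \<Longrightarrow> y \<in> Vn n \<Longrightarrow> vadd x y \<in> Vn n"
  by (simp add: Vn_def)

lemma finite_Vn [simp]: "finite (Vn n)"
  using finite_lists_length_eq[of "UNIV :: bool set" n] by (simp add: Vn_def)

lemma card_Vn: "card (Vn n) = 2 ^ n"
  using card_lists_length_eq[of "UNIV :: bool set" n] by (simp add: Vn_def)

lemma setadd_subset_Vn: "A \<subseteq> Vn n \<Longrightarrow> S \<subseteq> Vn n \<Longrightarrow> setadd A S \<subseteq> Vn n"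
  unfolding setadd_def by (auto intro: vadd_in_Vn)

lemma setadd_Un_left: "setadd (A \<union> A') S = setadd A S \<union> setadd A' S"
  unfolding setadd_def by blast

lemma setadd_vadd_image: "setadd (vadd v ` A) S = vadd v ` setadd A S"
proof (intro equalityI subsetI)
  fix z assume "z \<in> setadd (vadd v ` A) S"
  then obtain a s where "a \<in> A" "s \<in> S" "z = vadd v (vadd a s)"
    unfolding setadd_def by (auto simp: vadd_assoc)
  then show "z \<in> vadd v ` setadd A S"
    unfolding setadd_def by blast
next
  fix z assume "z \<in> vadd v ` setadd A S"
  then obtain a s where "a \<in> A" "s \<in> S" "z = vadd (vadd v a) s"
    unfolding setadd_def by (auto simp: vadd_assoc)
  then show "z \<in> setadd (vadd v ` A) S"
    unfolding setadd_def by blast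
qed

fun span2 :: "nat \<Rightarrow> bool list list \<Rightarrow> bool list set" where
  "span2 n [] = {vzero n}"
| "span2 n (v # G) = span2 n G \<union> vadd v ` span2 n G"

lemma lincomb_Cons:
  "lincomb n (v # G) (b # c) = (if b then vadd v (lincomb n G c) else lincomb n G c)"
proof -
  have "[0..<length (v # G)] = 0 # map Suc [0..<length G]"
    by (simp add: upt_conv_Cons map_Suc_upt del: upt_Suc)
  then show ?thesis
    unfolding lincomb_def by (simp add: comp_def del: upt_Suc) (simp only: nth_Cons_Suc, simp)
qed

lemma gspan_eq_span2: "gspan n G = span2 n G"
proof (induction G)
  case Nil
  then show ?case by (simp add: gspan_def lincomb_def)
next
  case (Cons v G)
  have "gspan n (v # G) = {lincomb n (v # G) (b # c) | b c. length c = length G}"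
    unfolding gspan_def by (auto simp: length_Suc_conv)
  also have "\<dots> = gspan n G \<union> vadd v ` gspan n G"
    unfolding gspan_def lincomb_Cons by (auto split: if_splits)
  finally show ?case using Cons by simp
qed

lemma span2_subset_Vn: "set G \<subseteq> Vn n \<Longrightarrow> span2 n G \<subseteq> Vn n"
  by (induction G) (auto intro: vadd_in_Vn)

lemma vzero_in_span2: "vzero n \<in> span2 n G"
  by (induction G) auto

lemma finite_span2: "finite (span2 n G)"
  by (induction G) auto

lemma card_span2_le: "card (span2 n G) \<le> 2 ^ length G"
proof (induction G)
  case Nil
  then show ?case by simp
next
  case (Cons v G)
  have "card (span2 n (v # G)) \<le> card (span2 n G) + card (vadd v ` span2 n G)"
    by (simp add: card_Un_le)
  also have "\<dots> \<le> 2 * card (span2 n G)"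
    using card_image_le[OF finite_span2] by simp
  finally show ?case using Cons by simp
qed

lemma vadd_in_span2:
  assumes "set G \<subseteq> Vn n" "x \<in> span2 n G" "y \<in> span2 n G"
  shows "vadd x y \<in> span2 n G"
  using assms
proof (induction G arbitrary: x y)
  case Nil
  then show ?case by (simp add: vadd_self)
next
  case (Cons v G)
  obtain a b where ab: "a \<in> span2 n G" "b \<in> span2 n G"
    and x: "x = a \<or> x = vadd v a" and y: "y = b \<or> y = vadd v b"
    using Cons.prems(2,3) by auto
  have "a \<in> Vn n" "b \<in> Vn n" "v \<in> Vn n"
    using Cons.prems(1) span2_subset_Vn[of G n] ab by auto
  then have "length v = length b"
    by (simp add: Vn_def)
  from x y have "vadd x y = vadd a b \<or> vadd x y = vadd v (vadd a b)"
    by (elim disjE) (simp_all add: vadd_assoc vadd_left_comm vadd_vadd_cancel[OF \<open>length v = length b\<close>])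
  moreover have "vadd a b \<in> span2 n G"
    using Cons ab by simp
  ultimately show ?case by auto
qed

lemma span2_Cons_of_mem:
  assumes "set G \<subseteq> Vn n" "v \<in> span2 n G"
  shows "span2 n (v # G) = span2 n G"
  using vadd_in_span2[OF assms(1) assms(2)] by auto

lemma lin_indep_Cons:
  assumes indep: "lin_indep n G" and v: "v \<in> Vn n" "v \<notin> span2 n G" and G: "set G \<subseteq> Vn n"
  shows "lin_indep n (v # G)"
  unfolding lin_indep_def
proof (intro allI impI)
  fix c i
  assume c: "length c = length (v # G) \<and> lincomb n (v # G) c = vzero n"
    and i: "i < length (v # G)"
  then obtain b c' where bc: "c = b # c'" "length c' = length G"
    by (cases c) auto
  let ?w = "lincomb n G c'"
  have w: "?w \<in> span2 n G"
    using bc(2) gspan_eq_span2[of n G] unfolding gspan_def by auto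
  have "\<not> b"
  proof
    assume b
    then have "vadd v ?w = vzero n"
      using c bc by (simp add: lincomb_Cons)
    moreover have "length ?w = length v" "length v = n"
      using v(1) w span2_subset_Vn[OF G] by (auto simp: Vn_def)
    ultimately have "v = ?w"
      using vadd_vadd_cancel_right[of ?w v] by (simp add: vzero_vadd)
    with w v(2) show False by simp
  qed
  moreover have "\<forall>k<length G. \<not> c' ! k"
    using \<open>\<not> b\<close> c bc indep by (simp add: lincomb_Cons lin_indep_def)
  ultimately show "\<not> c ! i"
    using bc i by (cases i) auto
qed

lemma linear_code_span2:
  assumes "set G \<subseteq> Vn n" "lin_indep n G"
  shows "linear_code n (length G) (span2 n G)"
  unfolding linear_code_def subspace2_def
  using span2_subset_Vn[OF assms(1)] vzero_in_span2 vadd_in_span2[OF assms(1)] assms gspan_eq_span2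
  by blast

definition uncovered :: "nat \<Rightarrow> bool list set \<Rightarrow> bool list set \<Rightarrow> bool list set" where
  "uncovered n B S = Vn n - setadd B S"

lemma uncovered_span2_Cons:
  assumes "v \<in> Vn n" "set G \<subseteq> Vn n" "S \<subseteq> Vn n"
  shows "uncovered n (span2 n (v # G)) S =
    {x \<in> uncovered n (span2 n G) S. vadd v x \<in> uncovered n (span2 n G) S}"
proof -
  define C where "C = setadd (span2 n G) S"
  have C: "C \<subseteq> Vn n"
    unfolding C_def using setadd_subset_Vn[OF span2_subset_Vn[OF assms(2)] assms(3)] .
  have "x \<in> vadd v ` C \<longleftrightarrow> vadd v x \<in> C" if x: "x \<in> Vn n" for x
  proof
    assume "x \<in> vadd v ` C"
    then obtain y where y: "y \<in> C" "x = vadd v y"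
      by blast
    then have "vadd v x = y"
      using C assms(1) by (auto simp: Vn_def vadd_vadd_cancel)
    with y show "vadd v x \<in> C"
      by simp
  next
    assume "vadd v x \<in> C"
    moreover have "x = vadd v (vadd v x)"
      using x assms(1) by (simp add: Vn_def vadd_vadd_cancel)
    ultimately show "x \<in> vadd v ` C"
      by blast
  qed
  then have "Vn n - (C \<union> vadd v ` C) = {x \<in> Vn n - C. vadd v x \<in> Vn n - C}"
    using assms(1) by (auto intro: vadd_in_Vn)
  then show ?thesis
    unfolding uncovered_def span2.simps setadd_Un_left setadd_vadd_image C_def .
qed

lemma sum_card_translate_overlap:
  assumes U: "U \<subseteq> Vn n"
  shows "(\<Sum>v\<in>Vn n. card {x \<in> U. vadd v x \<in> U}) = card U * card U"
proof -
  have fU: "finite U" using finite_subset[OF U finite_Vn] .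
  have translates: "{v \<in> Vn n. vadd v x \<in> U} = (\<lambda>u. vadd u x) ` U" if x: "x \<in> U" for x
  proof (intro equalityI subsetI)
    fix v assume v: "v \<in> {v \<in> Vn n. vadd v x \<in> U}"
    then have "v = vadd (vadd v x) x"
      using U x by (auto simp: Vn_def vadd_vadd_cancel_right)
    with v show "v \<in> (\<lambda>u. vadd u x) ` U"
      by blast
  next
    fix v assume "v \<in> (\<lambda>u. vadd u x) ` U"
    then obtain u where u: "u \<in> U" "v = vadd u x"
      by blast
    moreover have "length u = length x" "length x = n"
      using U x u by (auto simp: Vn_def)
    ultimately show "v \<in> {v \<in> Vn n. vadd v x \<in> U}"
      by (simp add: Vn_def vadd_vadd_cancel_right)
  qed
  have inj: "inj_on (\<lambda>u. vadd u x) U" if "x \<in> U" for x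
  proof (rule inj_onI)
    fix u u' assume "u \<in> U" "u' \<in> U" "vadd u x = vadd u' x"
    moreover have "length x = length u" "length x = length u'"
      using U \<open>x \<in> U\<close> \<open>u \<in> U\<close> \<open>u' \<in> U\<close> by (auto simp: Vn_def)
    ultimately show "u = u'"
      by (metis vadd_comm vadd_vadd_cancel)
  qed
  have "(\<Sum>v\<in>Vn n. card {x \<in> U. vadd v x \<in> U})
      = (\<Sum>v\<in>Vn n. \<Sum>x\<in>U. if vadd v x \<in> U then 1 else 0)"
    using fU by (simp add: sum.inter_filter[symmetric])
  also have "\<dots> = (\<Sum>x\<in>U. \<Sum>v\<in>Vn n. if vadd v x \<in> U then 1 else 0)"
    by (rule sum.swap)
  also have "\<dots> = (\<Sum>x\<in>U. card {v \<in> Vn n. vadd v x \<in> U})"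
    by (simp add: sum.inter_filter[symmetric])
  also have "\<dots> = (\<Sum>x\<in>U. card U)"
    using translates inj by (simp add: card_image)
  finally show ?thesis by simp
qed

lemma exists_translate_small_overlap:
  assumes "U \<subseteq> Vn n"
  obtains v where "v \<in> Vn n" "card {x \<in> U. vadd v x \<in> U} * 2 ^ n \<le> card U * card U"
proof (rule ccontr)
  assume "\<not> thesis"
  with that have "\<forall>v\<in>Vn n. card U * card U < card {x \<in> U. vadd v x \<in> U} * 2 ^ n"
    by force
  then have "(\<Sum>v\<in>Vn n. card U * card U) < (\<Sum>v\<in>Vn n. card {x \<in> U. vadd v x \<in> U} * 2 ^ n)"
    by (intro sum_strict_mono) (auto intro: vzero_in_Vn)
  also have "\<dots> = card U * card U * 2 ^ n"
    using sum_card_translate_overlap[OF assms] by (simp add: sum_distrib_right[symmetric])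
  finally show False by (simp add: card_Vn)
qed

lemma greedy_step:
  assumes G: "set G \<subseteq> Vn n" "length G < n" and S: "S \<subseteq> Vn n" "vzero n \<in> S"
  obtains v where "v \<in> Vn n" "v \<notin> span2 n G"
    "card (uncovered n (span2 n (v # G)) S) * 2 ^ n \<le> card (uncovered n (span2 n G) S) ^ 2"
proof -
  define U where "U = uncovered n (span2 n G) S"
  have U: "U \<subseteq> Vn n" "finite U"
    unfolding U_def uncovered_def by (auto intro: finite_subset)
  have U_step: "uncovered n (span2 n (v # G)) S = {x \<in> U. vadd v x \<in> U}" if "v \<in> Vn n" for v
    unfolding U_def using uncovered_span2_Cons[OF that G(1) S(1)] .
  show ?thesis
  proof (cases "U = {}")
    case True
    have "(2::nat) ^ length G < 2 ^ n"
      using G(2) by simp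
    then have "card (span2 n G) < card (Vn n)"
      using card_span2_le[of n G] by (simp only: card_Vn le_less_trans)
    then have "\<not> Vn n \<subseteq> span2 n G"
      using card_mono[OF finite_span2, of "Vn n" n G] by linarith
    then obtain v where v: "v \<in> Vn n" "v \<notin> span2 n G"
      by blast
    have "uncovered n (span2 n (v # G)) S = {}"
      using U_step[OF v(1)] True by simp
    with that v show ?thesis
      by simp
  next
    case False
    have "vadd (vzero n) (vzero n) \<in> setadd (span2 n G) S"
      unfolding setadd_def using vzero_in_span2 S(2) by blast
    then have "vzero n \<notin> U"
      unfolding U_def uncovered_def by (simp add: vzero_vadd)
    then have "U \<subset> Vn n"
      using U(1) vzero_in_Vn by blast
    then have "card U < 2 ^ n"
      using psubset_card_mono[OF finite_Vn] by (simp add: card_Vn)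
    then have proper: "card U * card U < card U * 2 ^ n"
      using False U(2) by (simp add: card_gt_0_iff)
    obtain v where v: "v \<in> Vn n"
      and small: "card {x \<in> U. vadd v x \<in> U} * 2 ^ n \<le> card U * card U"
      using exists_translate_small_overlap[OF U(1)] by blast
    have "v \<notin> span2 n G"
    proof
      assume "v \<in> span2 n G"
      then have "uncovered n (span2 n (v # G)) S = U"
        unfolding U_def by (simp only: span2_Cons_of_mem[OF G(1)])
      then have "{x \<in> U. vadd v x \<in> U} = U"
        using U_step[OF v] by simp
      with small proper show False
        by (simp add: mult.commute)
    qed
    moreover have "card (uncovered n (span2 n (v # G)) S) * 2 ^ n \<le> card U ^ 2"
      using small U_step[OF v] by (simp add: power2_eq_square)
    ultimately show ?thesis
      using that v unfolding U_def by blast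
  qed
qed

lemma greedy_code:
  assumes S: "S \<subseteq> Vn n" "vzero n \<in> S" and "k \<le> n"
  shows "\<exists>G. length G = k \<and> set G \<subseteq> Vn n \<and> lin_indep n G \<and>
    real (card (uncovered n (span2 n G) S)) \<le> 2 ^ n * (1 - card S / 2 ^ n) ^ (2 ^ k)"
  using \<open>k \<le> n\<close>
proof (induction k)
  case 0
  have card_S: "card S \<le> 2 ^ n"
    using card_mono[OF finite_Vn S(1)] by (simp add: card_Vn)
  have "setadd (span2 n []) S = S"
    using S(1) unfolding setadd_def by (force simp: Vn_def vzero_vadd)
  then have "card (uncovered n (span2 n []) S) = 2 ^ n - card S"
    using card_Diff_subset[OF finite_subset[OF S(1)] S(1)] by (simp add: uncovered_def card_Vn)
  then show ?case
    using card_S by (intro exI[of _ "[]"]) (simp add: lin_indep_def field_simps)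
next
  case (Suc k)
  define t :: real where "t = (1 - card S / 2 ^ n) ^ (2 ^ k)"
  obtain G where G: "length G = k" "set G \<subseteq> Vn n" "lin_indep n G"
    and bound: "real (card (uncovered n (span2 n G) S)) \<le> 2 ^ n * t"
    using Suc unfolding t_def by auto
  obtain v where v: "v \<in> Vn n" "v \<notin> span2 n G"
    and step: "card (uncovered n (span2 n (v # G)) S) * 2 ^ n \<le> card (uncovered n (span2 n G) S) ^ 2"
    using greedy_step[OF G(2) _ S] G(1) Suc.prems by auto
  have "real (card (uncovered n (span2 n (v # G)) S) * 2 ^ n)
      \<le> real (card (uncovered n (span2 n G) S) ^ 2)"
    using step by (simp only: of_nat_le_iff)
  also have "\<dots> \<le> (2 ^ n * t) ^ 2"
    using power_mono[OF bound] by simp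
  finally have "real (card (uncovered n (span2 n (v # G)) S)) * 2 ^ n \<le> (2 ^ n * t) ^ 2"
    by simp
  then have "real (card (uncovered n (span2 n (v # G)) S)) \<le> 2 ^ n * t ^ 2"
    by (simp add: power2_eq_square field_simps)
  moreover have "t ^ 2 = (1 - card S / 2 ^ n) ^ (2 ^ Suc k)"
    unfolding t_def by (simp flip: power_mult add: mult.commute)
  ultimately show ?case
    using G v lin_indep_Cons[OF G(3) v G(2)] by (intro exI[of _ "v # G"]) simp
qed

lemma Sn_subset_Vn: "Sn n \<beta> p \<subseteq> Vn n"
  by (simp add: Sn_def)

lemma vzero_in_Sn: "vzero n \<in> Sn n \<beta> p"
  by (simp add: Sn_def Vn_def window_limited_def window_weight_def vzero_def)

lemma covering_bound_lt_one:
  fixes n j :: nat and c :: real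
  assumes n: "n > 0" and c: "1 \<le> c" "c \<le> 2 ^ n"
    and j: "real n - log 2 c + log 2 (real n) \<le> real j"
  shows "2 ^ n * (1 - c / 2 ^ n) ^ (2 ^ j) < 1"
proof -
  define s where "s = c / 2 ^ n"
  have "2 powr (real n - log 2 c + log 2 (real n)) = 2 ^ n * real n / c"
    using c n by (simp add: powr_add powr_diff powr_realpow)
  with j have "2 ^ n * real n / c \<le> 2 ^ j"
    by (metis powr_realpow powr_mono one_le_numeral zero_less_numeral)
  then have n_le: "real n \<le> s * 2 ^ j"
    using c unfolding s_def by (simp add: field_simps)
  have "(1 - s) ^ (2 ^ j) \<le> exp (- s) ^ (2 ^ j)"
    using c exp_minus_ge[of s] unfolding s_def by (intro power_mono) (auto simp: field_simps)
  also have "\<dots> = exp (- (s * 2 ^ j))"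
    by (simp flip: exp_of_nat_mult add: mult.commute)
  also have "\<dots> \<le> exp (-1) ^ n"
    using n_le by (simp flip: exp_of_nat_mult)
  finally have "2 ^ n * (1 - s) ^ (2 ^ j) \<le> (2 * exp (-1)) ^ n"
    by (simp add: power_mult_distrib)
  also have "\<dots> < 1"
  proof -
    have "2 < exp (1::real)"
      using exp_minus_greater[of "-1"] by simp
    then have "2 * exp (-1) < (1::real)"
      by (simp add: exp_minus field_simps)
    with n show ?thesis
      by (metis power_less_one_iff exp_ge_zero mult_nonneg_nonneg zero_le_numeral)
  qed
  finally show ?thesis unfolding s_def .
qed

theorem lemma7:
  fixes \<beta> p n j :: nat
  assumes "\<beta> > 0" "p > 0" "n > 0"
    and "real n - log 2 (real (card (Sn n \<beta> p))) + log 2 (real n) \<le> real j"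
    and "j \<le> n"
  shows "\<exists>B. linear_code n j B \<and> mB n \<beta> p B < 1 \<and> setadd B (Sn n \<beta> p) = Vn n"
proof -
  \<comment> \<open>Of the window constraint only \<open>0 \<in> S\<close> matters.\<close>
  define S where "S = Sn n \<beta> p"
  have S: "S \<subseteq> Vn n" "vzero n \<in> S"
    unfolding S_def by (rule Sn_subset_Vn vzero_in_Sn)+
  then have "0 < card S" "card S \<le> 2 ^ n"
    using card_mono[OF finite_Vn S(1)] finite_subset[OF S(1)] by (auto simp: card_Vn card_gt_0_iff)
  then have "2 ^ n * (1 - card S / 2 ^ n) ^ (2 ^ j) < (1::real)"
    using covering_bound_lt_one[OF \<open>n > 0\<close>, of "card S" j] assms(4)
    unfolding S_def by (simp add: of_nat_le_iff[of _ "2 ^ n", symmetric])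
  moreover obtain G where G: "length G = j" "set G \<subseteq> Vn n" "lin_indep n G"
    and "real (card (uncovered n (span2 n G) S)) \<le> 2 ^ n * (1 - card S / 2 ^ n) ^ (2 ^ j)"
    using greedy_code[OF S \<open>j \<le> n\<close>] by blast
  ultimately have "card (uncovered n (span2 n G) S) = 0"
    by linarith
  then have "uncovered n (span2 n G) S = {}"
    by (simp add: uncovered_def)
  then show ?thesis
    using linear_code_span2[OF G(2,3)] G(1) setadd_subset_Vn[OF span2_subset_Vn[OF G(2)] S(1)]
    unfolding mB_def S_def[symmetric] uncovered_def by auto
qed

end
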